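(* Consider a maxout network $\mathcal N$ with $n_0$ inputs. Let $r\in\{0,\dots,n_0\}$ and let $J$ be an $r$-partial activation pattern. Then for every parameter value $\theta$, the activation region $\mathcal R(J,\theta)$ is a relatively open convex polyhedron in $\mathbb{R}^{n_0}$, and for almost every $\theta$ (with respect to Lebesgue measure) it is either empty or has codimension $r$.
   Context: A rank-$K$ maxout unit computes $y\mapsto\max_{k\in[K]}\{w_k\cdot y+b_k\}$. The network has hidden layers whose coordinates are rank-$K$ maxout units (followed by a linear output layer); hidden units are indexed by $z\in[N]$, and for unit $z$ in layer $l(z)$, $\zeta_{z,k}(x;\theta)=w_{z,k}\cdot x_{l(z)-1}+b_{z,k}$ is its $k$-th pre-activation feature as a function of the network input $x$ ($x_{l-1}$ the output of layer $l-1$, $x_0=x$). An activation pattern is a tuple $J=(J_z)_{z\in[N]}$ of nonempty sets $J_z\subseteq[K]$; it is $r$-partial if $\sum_z(|J_z|-1)=r$. Its activation region is $\mathcal R(J,\theta)=\{x\in\mathbb{R}^{n_0}:\arg\max_{k\in[K]}\zeta_{z,k}(x;\theta)=J_z\text{ for all }z\in[N]\}$. *)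

theory Defs
  imports "HOL-Analysis.Analysis" "HOL-Probability.Probability"
begin

text \<open>Maxout network with input space real^'n (so n0 = CARD('n)) and hidden layers
  of widths ns!0, ..., ns!(L-1), L = length ns (layers numbered from 0 here).\<close>

datatype 'n param =
    W0 nat nat 'n          \<comment> \<open>W0 i k j: weight of input coordinate j in piece k of unit i of layer 0\<close>
  | W nat nat nat nat      \<comment> \<open>W l i k j (0 < l): weight of unit j of layer l-1 in piece k of unit i of layer l\<close>
  | Bp nat nat nat         \<comment> \<open>Bp l i k: bias of piece k of unit i of layer l\<close>

definition param_set :: "nat list \<Rightarrow> nat \<Rightarrow> 'n::finite param set" where
  "param_set ns K =
     {W0 i k j | i k j. 0 < length ns \<and> i < ns!0 \<and> k < K}
   \<union> {W l i k j | l i k j. 0 < l \<and> l < length ns \<and> i < ns!l \<and> k < K \<and> j < ns!(l-1)}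
   \<union> {Bp l i k | l i k. l < length ns \<and> i < ns!l \<and> k < K}"

fun feat :: "('n::finite param \<Rightarrow> real) \<Rightarrow> nat list \<Rightarrow> nat \<Rightarrow> nat \<Rightarrow> real^'n \<Rightarrow> nat \<Rightarrow> nat \<Rightarrow> real" where
  "feat \<theta> ns K 0 x i k = (\<Sum>j\<in>UNIV. \<theta> (W0 i k j) * x $ j) + \<theta> (Bp 0 i k)"
| "feat \<theta> ns K (Suc l) x i k =
     (\<Sum>j<ns!l. \<theta> (W (Suc l) i k j) * Max ((\<lambda>k'. feat \<theta> ns K l x j k') ` {..<K}))
     + \<theta> (Bp (Suc l) i k)"

definition unit_out :: "('n::finite param \<Rightarrow> real) \<Rightarrow> nat list \<Rightarrow> nat \<Rightarrow> nat \<Rightarrow> real^'n \<Rightarrow> nat \<Rightarrow> real" where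
  "unit_out \<theta> ns K l x i = Max ((\<lambda>k. feat \<theta> ns K l x i k) ` {..<K})"

definition argmax_set :: "('n::finite param \<Rightarrow> real) \<Rightarrow> nat list \<Rightarrow> nat \<Rightarrow> nat \<Rightarrow> real^'n \<Rightarrow> nat \<Rightarrow> nat set" where
  "argmax_set \<theta> ns K l x i =
     {k. k < K \<and> (\<forall>k'<K. feat \<theta> ns K l x i k' \<le> feat \<theta> ns K l x i k)}"

definition activation_pattern :: "nat list \<Rightarrow> nat \<Rightarrow> (nat \<Rightarrow> nat \<Rightarrow> nat set) \<Rightarrow> bool" where
  "activation_pattern ns K J \<longleftrightarrow>
     (\<forall>l<length ns. \<forall>i<ns!l. J l i \<noteq> {} \<and> J l i \<subseteq> {..<K})"

definition partial_degree :: "nat list \<Rightarrow> (nat \<Rightarrow> nat \<Rightarrow> nat set) \<Rightarrow> nat" where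
  "partial_degree ns J = (\<Sum>(l,i)\<in>{(l,i). l < length ns \<and> i < ns!l}. card (J l i) - 1)"

definition activation_region ::
  "nat list \<Rightarrow> nat \<Rightarrow> (nat \<Rightarrow> nat \<Rightarrow> nat set) \<Rightarrow> ('n::finite param \<Rightarrow> real) \<Rightarrow> (real^'n) set" where
  "activation_region ns K J \<theta> =
     {x. \<forall>l<length ns. \<forall>i<ns!l. argmax_set \<theta> ns K l x i = J l i}"

end

theory Submission
  imports Defs
begin

(* On the activation region of J the maximum of every unit is attained at a fixed piece, so by
   induction over the layers all features are affine functions of the input there, and the region
   is cut out by finitely many affine equations (the pieces of J tied with a representative one)
   and strict inequalities (the pieces outside J): it is a relatively open convex polyhedron whose
   affine dimension is n0 minus the rank of the normals of the equations.  There are exactly r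
   equations, and the bias of a tied piece enters its own equation only, since later layers read
   only the representative pieces.  Eliminating the equations one at a time (Gram-Schmidt on the
   normals, carrying the right-hand sides along), a dependency among the normals of a solvable
   system makes some reduced equation vanish identically; with all other parameters fixed this
   pins the corresponding bias to a single value, so by Fubini it happens only on a null set. *)

section \<open>Systems of affine equations and strict inequalities\<close>

definition solution_set :: "('q \<Rightarrow> 'a::real_inner) \<Rightarrow> ('q \<Rightarrow> real) \<Rightarrow> 'q set \<Rightarrow> 'q set \<Rightarrow> 'a set" where
  "solution_set A b Q Q' = {x. (\<forall>q\<in>Q. A q \<bullet> x = b q) \<and> (\<forall>q\<in>Q'. A q \<bullet> x < b q)}"

lemma solution_set_eq_Int:
  "solution_set A b Q Q' = (\<Inter>q\<in>Q'. {x. A q \<bullet> x < b q}) \<inter> (\<Inter>q\<in>Q. {x. A q \<bullet> x = b q})"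
  by (auto simp: solution_set_def)

lemma convex_solution_set: "convex (solution_set A b Q Q')"
  unfolding solution_set_eq_Int
  by (intro convex_Int convex_INT convex_halfspace_lt convex_hyperplane)

lemma affine_solutions_eq: "affine (\<Inter>q\<in>Q. {x. A q \<bullet> x = b q})"
  by (intro affine_Inter) (auto intro: affine_hyperplane)

lemma open_solutions_lt: "finite Q' \<Longrightarrow> open (\<Inter>q\<in>Q'. {x. A q \<bullet> x < b q})"
  by (intro open_INT) (auto intro: open_halfspace_lt)

lemma rel_interior_solution_set:
  fixes A :: "'q \<Rightarrow> 'a::euclidean_space"
  assumes "finite Q'"
  shows "rel_interior (solution_set A b Q Q') = solution_set A b Q Q'"
proof (cases "solution_set A b Q Q' = {}")
  case False
  let ?U = "\<Inter>q\<in>Q'. {x. A q \<bullet> x < b q}"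
  have "convex ?U" "interior ?U = ?U"
    by (simp_all add: convex_INT convex_halfspace_lt interior_open open_solutions_lt assms)
  with False show ?thesis
    unfolding solution_set_eq_Int by (simp add: rel_interior_convex_Int_affine affine_solutions_eq)
qed simp

lemma closure_solution_set:
  fixes A :: "'q \<Rightarrow> 'a::euclidean_space"
  assumes "solution_set A b Q Q' \<noteq> {}"
  shows "closure (solution_set A b Q Q') = {x. (\<forall>q\<in>Q. A q \<bullet> x = b q) \<and> (\<forall>q\<in>Q'. A q \<bullet> x \<le> b q)}"
    (is "closure ?R = ?P")
proof
  have "closed ?P"
    by (simp only: Collect_conj_eq Collect_ball_eq)
      (intro closed_Int closed_INT ballI closed_Collect_eq closed_Collect_le continuous_intros)
  then show "closure ?R \<subseteq> ?P"
    by (intro closure_minimal) (auto simp: solution_set_def less_imp_le)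
next
  obtain x0 where x0: "x0 \<in> ?R" using assms by blast
  show "?P \<subseteq> closure ?R"
  proof
    fix y assume y: "y \<in> ?P"
    have "open_segment x0 y \<subseteq> ?R"
    proof
      fix z assume "z \<in> open_segment x0 y"
      then obtain u :: real where u: "0 < u" "u < 1" and z: "z = (1 - u) *\<^sub>R x0 + u *\<^sub>R y"
        by (auto simp: in_segment)
      have Az: "A q \<bullet> z = (1 - u) * (A q \<bullet> x0) + u * (A q \<bullet> y)" for q
        by (simp add: z inner_add_right)
      show "z \<in> ?R"
        unfolding solution_set_def
      proof (intro CollectI conjI ballI)
        fix q assume "q \<in> Q"
        then show "A q \<bullet> z = b q" using x0 y by (simp add: Az solution_set_def algebra_simps)
      next
        fix q assume q: "q \<in> Q'"
        have "(1 - u) * (A q \<bullet> x0) < (1 - u) * b q"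
          using x0 q u by (auto simp: solution_set_def intro: mult_strict_left_mono)
        moreover have "u * (A q \<bullet> y) \<le> u * b q"
          using y q u by (auto intro: mult_left_mono)
        moreover have "(1 - u) * b q + u * b q = b q" by (simp add: algebra_simps)
        ultimately show "A q \<bullet> z < b q" unfolding Az by linarith
      qed
    qed
    then have "closure (open_segment x0 y) \<subseteq> closure ?R" by (rule closure_mono)
    then show "y \<in> closure ?R"
      using x0 closure_subset by (cases "x0 = y") auto
  qed
qed

lemma solution_set_eq_rel_interior_polyhedron:
  fixes A :: "'q \<Rightarrow> 'a::euclidean_space"
  assumes "finite Q" and "finite Q'"
  shows "\<exists>P. polyhedron P \<and> solution_set A b Q Q' = rel_interior P"
proof (cases "solution_set A b Q Q' = {}")
  case True
  then show ?thesis by (intro exI[of _ "{}"]) auto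
next
  case False
  let ?P = "closure (solution_set A b Q Q')"
  have "?P = (\<Inter>q\<in>Q. {x. A q \<bullet> x = b q}) \<inter> (\<Inter>q\<in>Q'. {x. A q \<bullet> x \<le> b q})"
    unfolding closure_solution_set[OF False] by auto
  then have "polyhedron ?P"
    using assms by (auto intro!: polyhedron_Int polyhedron_Inter polyhedron_hyperplane polyhedron_halfspace_le)
  moreover have "rel_interior ?P = solution_set A b Q Q'"
    by (simp add: convex_rel_interior_closure convex_solution_set rel_interior_solution_set assms)
  ultimately show ?thesis by metis
qed

lemma aff_dim_solution_set:
  fixes A :: "'q \<Rightarrow> 'a::euclidean_space"
  assumes "finite Q'" and "solution_set A b Q Q' \<noteq> {}"
  shows "aff_dim (solution_set A b Q Q') = int DIM('a) - int (dim (A ` Q))"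
proof -
  define S where "S = (\<Inter>q\<in>Q. {x. A q \<bullet> x = b q})"
  define Z where "Z = {y. \<forall>v\<in>span (A ` Q). orthogonal v y}"
  obtain x0 where x0: "x0 \<in> solution_set A b Q Q'" using assms(2) by blast
  then have "x0 \<in> S" by (auto simp: S_def solution_set_eq_Int)
  have "openin (top_of_set S) (solution_set A b Q Q')"
    using openin_open_Int[OF open_solutions_lt[OF assms(1)], of S]
    by (simp add: solution_set_eq_Int S_def Int_commute)
  then have "aff_dim (solution_set A b Q Q') = aff_dim S"
    using affine_solutions_eq assms(2) unfolding S_def by (rule aff_dim_openin)
  also have "S = (+) x0 ` Z"
  proof -
    have "y \<in> Z \<longleftrightarrow> (\<forall>q\<in>Q. A q \<bullet> y = 0)" for y
    proof
      show "y \<in> Z \<Longrightarrow> \<forall>q\<in>Q. A q \<bullet> y = 0"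
        by (auto simp: Z_def orthogonal_def intro: span_base)
      assume "\<forall>q\<in>Q. A q \<bullet> y = 0"
      then have "orthogonal y v" if "v \<in> span (A ` Q)" for v
        using that by (intro orthogonal_to_span[of v]) (auto simp: orthogonal_def inner_commute)
      then show "y \<in> Z" by (auto simp: Z_def orthogonal_commute)
    qed
    then show ?thesis
      using \<open>x0 \<in> S\<close> unfolding S_def
      by (auto simp: image_iff inner_add_right inner_diff_right intro!: bexI[of _ "_ - x0"])
  qed
  also have "aff_dim ((+) x0 ` Z) = int (dim Z)"
    by (simp add: aff_dim_translation_eq aff_dim_subspace Z_def subspace_orthogonal_to_vectors)
  also have "dim Z = DIM('a) - dim (A ` Q)"
    using dim_subspace_orthogonal_to_vectors[of "span (A ` Q)" UNIV] by (simp add: Z_def)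
  finally show ?thesis
    using dim_subset_UNIV[of "A ` Q"] by simp
qed

section \<open>Gram-Schmidt elimination of affine equations\<close>

definition proj_coeff :: "'a::real_inner \<Rightarrow> 'a \<Rightarrow> real" where
  "proj_coeff u v = (v \<bullet> u) / (u \<bullet> u)"

(* The right-hand sides undergo the same row operations as the normals, with coefficients
   determined by the normals alone. *)
definition gs_step :: "('a::real_inner \<times> real) list \<Rightarrow> 'a \<times> real \<Rightarrow> 'a \<times> real" where
  "gs_step es e =
     (fst e - (\<Sum>i<length es. proj_coeff (fst (es ! i)) (fst e) *\<^sub>R fst (es ! i)),
      snd e - (\<Sum>i<length es. proj_coeff (fst (es ! i)) (fst e) * snd (es ! i)))"

fun gram_schmidt :: "('a::real_inner \<times> real) list \<Rightarrow> ('a \<times> real) list" where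
  "gram_schmidt [] = []"
| "gram_schmidt (e # es) = gs_step (gram_schmidt es) e # gram_schmidt es"

lemma length_gram_schmidt [simp]: "length (gram_schmidt es) = length es"
  by (induct es) auto

lemma nth_gram_schmidt:
  "j < length es \<Longrightarrow> gram_schmidt es ! j = gs_step (gram_schmidt (drop (Suc j) es)) (es ! j)"
  by (induct es arbitrary: j) (auto simp: nth_Cons split: nat.split)

lemma gram_schmidt_solution:
  assumes "\<forall>e\<in>set es. fst e \<bullet> x = snd e"
  shows "\<forall>e\<in>set (gram_schmidt es). fst e \<bullet> x = snd e"
  using assms
proof (induct es)
  case (Cons e es)
  let ?gs = "gram_schmidt es"
  have "fst (gs_step ?gs e) \<bullet> x - snd (gs_step ?gs e)
        = (fst e \<bullet> x - snd e)
          - (\<Sum>i<length ?gs. proj_coeff (fst (?gs ! i)) (fst e) * (fst (?gs ! i) \<bullet> x - snd (?gs ! i)))"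
    by (simp add: gs_step_def inner_diff_left inner_sum_left sum_subtractf algebra_simps)
  also have "\<dots> = 0" using Cons by simp
  finally show ?case using Cons by simp
qed simp

lemma gs_step_orthogonal:
  assumes "\<forall>i<length es. \<forall>j<length es. i \<noteq> j \<longrightarrow> fst (es ! i) \<bullet> fst (es ! j) = 0"
    and "m < length es"
  shows "fst (gs_step es e) \<bullet> fst (es ! m) = 0"
proof -
  let ?u = "\<lambda>i. fst (es ! i)"
  let ?c = "\<lambda>i. proj_coeff (?u i) (fst e)"
  have "(\<Sum>i<length es. ?c i * (?u i \<bullet> ?u m)) = ?c m * (?u m \<bullet> ?u m)"
    using assms by (subst sum.remove[of _ m]) (auto intro!: sum.neutral)
  also have "\<dots> = fst e \<bullet> ?u m"
    by (cases "?u m = 0") (auto simp: proj_coeff_def)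
  finally show ?thesis
    by (simp add: gs_step_def inner_diff_left inner_sum_left)
qed

lemma gram_schmidt_orthogonal:
  "\<forall>i<length es. \<forall>j<length es. i \<noteq> j \<longrightarrow> fst (gram_schmidt es ! i) \<bullet> fst (gram_schmidt es ! j) = 0"
proof (induct es)
  case (Cons e es)
  have "fst (gs_step (gram_schmidt es) e) \<bullet> fst (gram_schmidt es ! m) = 0" if "m < length es" for m
    using gs_step_orthogonal[of "gram_schmidt es" m e] Cons that by simp
  then show ?case
    using Cons by (auto simp: nth_Cons inner_commute split: nat.split)
qed simp

lemma gram_schmidt_span: "e \<in> set (gram_schmidt es) \<Longrightarrow> fst e \<in> span (fst ` set es)"
proof (induct es arbitrary: e)
  case (Cons e' es)
  have IH: "fst f \<in> span (fst ` set (e' # es))" if "f \<in> set (gram_schmidt es)" for f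
    using Cons.hyps[OF that] span_mono[of "fst ` set es" "fst ` set (e' # es)"] by auto
  have "fst (gs_step (gram_schmidt es) e') \<in> span (fst ` set (e' # es))"
    unfolding gs_step_def fst_conv
    by (intro span_diff span_sum span_scale IH span_base) auto
  moreover have "e = gs_step (gram_schmidt es) e' \<or> e \<in> set (gram_schmidt es)"
    using Cons.prems by simp
  ultimately show ?case using IH by (elim disjE) simp_all
qed simp

lemma length_le_dim_gram_schmidt:
  fixes es :: "('a::euclidean_space \<times> real) list"
  assumes "\<forall>e\<in>set (gram_schmidt es). fst e \<noteq> 0"
  shows "length es \<le> dim (fst ` set es)"
proof -
  let ?u = "\<lambda>i. fst (gram_schmidt es ! i)"
  have nz: "?u i \<noteq> 0" if "i < length es" for i
    using assms that by (simp add: nth_mem)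
  have orth: "?u i \<bullet> ?u j = 0" if "i < length es" "j < length es" "i \<noteq> j" for i j
    using gram_schmidt_orthogonal[of es] that by blast
  have "inj_on ?u {..<length es}"
    using orth nz by (intro inj_onI) (metis inner_eq_zero_iff lessThan_iff)
  then have card: "card (?u ` {..<length es}) = length es"
    by (simp add: card_image)
  have ind: "independent (?u ` {..<length es})"
    using orth nz by (intro pairwise_orthogonal_independent) (auto simp: pairwise_def orthogonal_def)
  have "?u i \<in> span (fst ` set es)" if "i < length es" for i
    using gram_schmidt_span[OF nth_mem] that by simp
  then have "?u ` {..<length es} \<subseteq> span (fst ` set es)"
    by blast
  from independent_card_le_dim[OF this ind] show ?thesis
    by (simp add: card)
qed

lemma length_le_dim_gram_schmidt_solvable:
  fixes es :: "('a::euclidean_space \<times> real) list"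
  assumes "\<forall>e\<in>set es. fst e \<bullet> x = snd e" and "(0, 0) \<notin> set (gram_schmidt es)"
  shows "length es \<le> dim (fst ` set es)"
proof (rule length_le_dim_gram_schmidt, intro ballI)
  fix e assume e: "e \<in> set (gram_schmidt es)"
  then have "fst e \<bullet> x = snd e"
    using gram_schmidt_solution[OF assms(1)] by blast
  then show "fst e \<noteq> 0"
    using e assms(2) by (metis inner_zero_left prod.collapse)
qed

lemma borel_measurable_gram_schmidt:
  fixes A :: "'b \<Rightarrow> 'q \<Rightarrow> 'a::euclidean_space" and c :: "'b \<Rightarrow> 'q \<Rightarrow> real"
  assumes "\<And>q. q \<in> set qs \<Longrightarrow> (\<lambda>\<theta>. A \<theta> q) \<in> borel_measurable M"
    and "\<And>q. q \<in> set qs \<Longrightarrow> (\<lambda>\<theta>. c \<theta> q) \<in> borel_measurable M"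
    and "j < length qs"
  shows "(\<lambda>\<theta>. fst (gram_schmidt (map (\<lambda>q. (A \<theta> q, c \<theta> q)) qs) ! j)) \<in> borel_measurable M
       \<and> (\<lambda>\<theta>. snd (gram_schmidt (map (\<lambda>q. (A \<theta> q, c \<theta> q)) qs) ! j)) \<in> borel_measurable M"
  using assms
proof (induct qs arbitrary: j)
  case (Cons q qs)
  let ?gs = "\<lambda>\<theta>. gram_schmidt (map (\<lambda>q. (A \<theta> q, c \<theta> q)) qs)"
  have IH: "(\<lambda>\<theta>. fst (?gs \<theta> ! i)) \<in> borel_measurable M" "(\<lambda>\<theta>. snd (?gs \<theta> ! i)) \<in> borel_measurable M"
    if "i < length qs" for i
    using Cons that by auto
  have "(\<lambda>\<theta>. fst (gs_step (?gs \<theta>) (A \<theta> q, c \<theta> q))) \<in> borel_measurable M"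
       "(\<lambda>\<theta>. snd (gs_step (?gs \<theta>) (A \<theta> q, c \<theta> q))) \<in> borel_measurable M"
    unfolding gs_step_def fst_conv snd_conv proj_coeff_def length_gram_schmidt length_map
    using Cons.prems(1,2) by (auto intro!: borel_measurable_diff borel_measurable_sum borel_measurable_scaleR
        borel_measurable_times borel_measurable_divide borel_measurable_inner IH)
  then show ?case
    using Cons.prems(3) IH by (cases j) auto
qed simp

section \<open>Affine systems with generic right-hand sides\<close>

lemma null_sets_PiM_lborel_if_sections_subsingleton:
  fixes N :: "('i \<Rightarrow> real) set"
  assumes "finite I" and "p \<in> I" and "N \<in> sets (PiM I (\<lambda>_. lborel))"
    and "\<And>x y y'. x \<in> space (PiM (I - {p}) (\<lambda>_. lborel)) \<Longrightarrow> x(p := y) \<in> N \<Longrightarrow> x(p := y') \<in> N \<Longrightarrow> y = y'"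
  shows "N \<in> null_sets (PiM I (\<lambda>_. lborel))"
proof -
  interpret product_sigma_finite "\<lambda>_::'i. lborel :: real measure"
    by (simp add: product_sigma_finite_def sigma_finite_lborel)
  have I: "I = insert p (I - {p})" using assms(2) by auto
  have "emeasure (PiM I (\<lambda>_. lborel)) N = (\<integral>\<^sup>+ \<theta>. indicator N \<theta> \<partial>PiM (insert p (I - {p})) (\<lambda>_. lborel))"
    using assms(3) I by simp
  also have "\<dots> = (\<integral>\<^sup>+ x. (\<integral>\<^sup>+ y. indicator N (x(p := y)) \<partial>lborel) \<partial>PiM (I - {p}) (\<lambda>_. lborel))"
    using assms(1,3) I by (subst product_nn_integral_insert) auto
  also have "\<dots> = (\<integral>\<^sup>+ x. 0 \<partial>PiM (I - {p}) (\<lambda>_. lborel :: real measure))"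
  proof (intro nn_integral_cong)
    fix x assume x: "x \<in> space (PiM (I - {p}) (\<lambda>_. lborel :: real measure))"
    obtain y0 where y0: "\<And>y. x(p := y) \<in> N \<Longrightarrow> y = y0"
    proof (cases "\<exists>y. x(p := y) \<in> N")
      case True
      then obtain y1 where "x(p := y1) \<in> N" by blast
      with assms(4)[OF x] that show ?thesis by blast
    qed blast
    have "(\<integral>\<^sup>+ y. indicator N (x(p := y)) \<partial>lborel) \<le> (\<integral>\<^sup>+ y. indicator {y0} y \<partial>lborel)"
      using y0 by (intro nn_integral_mono) (auto simp: indicator_def)
    then show "(\<integral>\<^sup>+ y. indicator N (x(p := y)) \<partial>lborel) = 0"
      by simp
  qed
  finally show ?thesis
    using assms(3) by (intro null_setsI) auto
qed

lemma null_sets_gram_schmidt_nth_eq_zero: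
  fixes E :: "('i \<Rightarrow> real) \<Rightarrow> ('a::real_inner \<times> real) list"
    and I :: "'i set" and j :: nat
  defines "N \<equiv> {\<theta> \<in> space (PiM I (\<lambda>_. lborel)). gram_schmidt (E \<theta>) ! j = (0, 0)}"
  assumes "finite I" and "p \<in> I" and "N \<in> sets (PiM I (\<lambda>_. lborel))"
    and "\<And>\<theta>. j < length (E \<theta>)"
    and "\<And>\<theta> y. drop (Suc j) (E (\<theta>(p := y))) = drop (Suc j) (E \<theta>)"
    and "\<And>\<theta> y. fst (E (\<theta>(p := y)) ! j) = fst (E \<theta> ! j)"
    and "\<And>\<theta>. inj (\<lambda>y. snd (E (\<theta>(p := y)) ! j))"
  shows "N \<in> null_sets (PiM I (\<lambda>_. lborel))"
proof (rule null_sets_PiM_lborel_if_sections_subsingleton[OF assms(2-4)])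
  fix x y y'
  let ?gs = "gram_schmidt (drop (Suc j) (E x))"
  let ?S = "\<Sum>i<length ?gs. proj_coeff (fst (?gs ! i)) (fst (E x ! j)) * snd (?gs ! i)"
  have "gram_schmidt (E (x(p := z))) ! j = gs_step ?gs (E (x(p := z)) ! j)" for z
    by (simp only: nth_gram_schmidt[OF assms(5)] assms(6))
  then have "snd (gram_schmidt (E (x(p := z))) ! j) = snd (E (x(p := z)) ! j) - ?S" for z
    by (simp add: gs_step_def assms(7))
  moreover assume "x(p := y) \<in> N" "x(p := y') \<in> N"
  then have "snd (gram_schmidt (E (x(p := y))) ! j) = 0" "snd (gram_schmidt (E (x(p := y'))) ! j) = 0"
    by (simp_all add: N_def)
  ultimately have "snd (E (x(p := y)) ! j) = snd (E (x(p := y')) ! j)"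
    by simp
  then show "y = y'"
    using assms(8) by (auto dest: injD)
qed

context
  fixes I :: "'i set" and Q :: "'q set" and p :: "'q \<Rightarrow> 'i"
    and A :: "('i \<Rightarrow> real) \<Rightarrow> 'q \<Rightarrow> 'a::euclidean_space" and c :: "('i \<Rightarrow> real) \<Rightarrow> 'q \<Rightarrow> real"
  assumes finite_I: "finite I" and finite_Q: "finite Q" and p_in_I: "p ` Q \<subseteq> I"
    and A_measurable: "\<And>q. q \<in> Q \<Longrightarrow> (\<lambda>\<theta>. A \<theta> q) \<in> borel_measurable (PiM I (\<lambda>_. lborel))"
    and c_measurable: "\<And>q. q \<in> Q \<Longrightarrow> (\<lambda>\<theta>. c \<theta> q) \<in> borel_measurable (PiM I (\<lambda>_. lborel))"
    and A_fun_upd: "\<And>\<theta> q q' y. q \<in> Q \<Longrightarrow> q' \<in> Q \<Longrightarrow> A (\<theta>(p q := y)) q' = A \<theta> q'"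
    and c_fun_upd: "\<And>\<theta> q q' y. q \<in> Q \<Longrightarrow> q' \<in> Q \<Longrightarrow> q' \<noteq> q \<Longrightarrow> c (\<theta>(p q := y)) q' = c \<theta> q'"
    and inj_c_fun_upd: "\<And>\<theta> q. q \<in> Q \<Longrightarrow> inj (\<lambda>y. c (\<theta>(p q := y)) q)"
begin

lemma null_sets_gram_schmidt_system_nth_eq_zero:
  assumes "distinct qs" and "set qs \<subseteq> Q" and j: "j < length qs"
  shows "{\<theta> \<in> space (PiM I (\<lambda>_. lborel)). gram_schmidt (map (\<lambda>q. (A \<theta> q, c \<theta> q)) qs) ! j = (0, 0)}
    \<in> null_sets (PiM I (\<lambda>_. lborel))"
proof (rule null_sets_gram_schmidt_nth_eq_zero[where p = "p (qs ! j)"])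
  let ?gs = "\<lambda>\<theta>. gram_schmidt (map (\<lambda>q. (A \<theta> q, c \<theta> q)) qs) ! j"
  have "(\<lambda>\<theta>. fst (?gs \<theta>)) \<in> borel_measurable (PiM I (\<lambda>_. lborel))"
       "(\<lambda>\<theta>. snd (?gs \<theta>)) \<in> borel_measurable (PiM I (\<lambda>_. lborel))"
    using borel_measurable_gram_schmidt[of qs A _ c j] A_measurable c_measurable assms by auto
  then show "{\<theta> \<in> space (PiM I (\<lambda>_. lborel)). ?gs \<theta> = (0, 0)} \<in> sets (PiM I (\<lambda>_. lborel))"
    unfolding prod_eq_iff fst_zero snd_zero by measurable
  have "qs ! j \<notin> set (drop (Suc j) qs)"
    using distinct_drop[OF assms(1), of j] Cons_nth_drop_Suc[OF j] by (metis distinct.simps(2))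
  then have "q \<in> Q \<and> q \<noteq> qs ! j" if "q \<in> set (drop (Suc j) qs)" for q
    using that assms(2) by (auto dest: in_set_dropD)
  moreover have "qs ! j \<in> Q"
    using j assms(2) by auto
  ultimately show "drop (Suc j) (map (\<lambda>q. (A (\<theta>(p (qs ! j) := y)) q, c (\<theta>(p (qs ! j) := y)) q)) qs) =
      drop (Suc j) (map (\<lambda>q. (A \<theta> q, c \<theta> q)) qs)"
    "fst (map (\<lambda>q. (A (\<theta>(p (qs ! j) := y)) q, c (\<theta>(p (qs ! j) := y)) q)) qs ! j) =
      fst (map (\<lambda>q. (A \<theta> q, c \<theta> q)) qs ! j)"
    "inj (\<lambda>y. snd (map (\<lambda>q. (A (\<theta>(p (qs ! j) := y)) q, c (\<theta>(p (qs ! j) := y)) q)) qs ! j))"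
    for \<theta> y
    using j A_fun_upd c_fun_upd inj_c_fun_upd by (auto simp: drop_map intro!: map_cong)
  show "p (qs ! j) \<in> I"
    using \<open>qs ! j \<in> Q\<close> p_in_I by auto
qed (use finite_I j in auto)

lemma AE_solvable_imp_dim_eq_card:
  "AE \<theta> in PiM I (\<lambda>_. lborel). (\<exists>x. \<forall>q\<in>Q. A \<theta> q \<bullet> x = c \<theta> q) \<longrightarrow> dim (A \<theta> ` Q) = card Q"
proof -
  obtain qs where qs: "set qs = Q" "distinct qs"
    using finite_distinct_list[OF finite_Q] by blast
  define E where "E \<theta> = map (\<lambda>q. (A \<theta> q, c \<theta> q)) qs" for \<theta>
  have "AE \<theta> in PiM I (\<lambda>_. lborel).
      \<forall>j\<in>{..<length qs}. \<theta> \<notin> {\<theta> \<in> space (PiM I (\<lambda>_. lborel)). gram_schmidt (E \<theta>) ! j = (0, 0)}"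
    using null_sets_gram_schmidt_system_nth_eq_zero[OF qs(2)] qs(1)
    by (intro AE_finite_allI AE_not_in) (auto simp: E_def)
  then have "AE \<theta> in PiM I (\<lambda>_. lborel). (0, 0) \<notin> set (gram_schmidt (E \<theta>))"
    using AE_space by eventually_elim (auto simp: in_set_conv_nth E_def)
  then show ?thesis
  proof (rule eventually_mono, intro impI)
    fix \<theta> assume nonzero: "(0, 0) \<notin> set (gram_schmidt (E \<theta>))"
    assume "\<exists>x. \<forall>q\<in>Q. A \<theta> q \<bullet> x = c \<theta> q"
    then obtain x where "\<forall>e\<in>set (E \<theta>). fst e \<bullet> x = snd e"
      using qs(1) by (auto simp: E_def)
    then have "card Q \<le> dim (A \<theta> ` Q)"
      using length_le_dim_gram_schmidt_solvable[OF _ nonzero] distinct_card[OF qs(2)] qs(1)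
      by (simp add: E_def image_image)
    moreover have "dim (A \<theta> ` Q) \<le> card Q"
      using dim_le_card'[of "A \<theta> ` Q"] card_image_le[of Q "A \<theta>"] finite_Q by simp
    ultimately show "dim (A \<theta> ` Q) = card Q" by simp
  qed
qed

end

section \<open>Activation regions of maxout networks\<close>

lemma all_less_cong_prefix:
  fixes n :: nat
  assumes "\<And>l. l < n \<Longrightarrow> \<forall>l'<l. P l' \<Longrightarrow> P l \<longleftrightarrow> Q l"
  shows "(\<forall>l<n. P l) \<longleftrightarrow> (\<forall>l<n. Q l)"
proof
  assume P: "\<forall>l<n. P l"
  show "\<forall>l<n. Q l"
  proof (intro allI impI)
    fix l assume l: "l < n"
    have "\<forall>l'<l. P l'"
      using P l by auto
    then show "Q l"
      using assms[OF l] P l by blast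
  qed
next
  assume Q: "\<forall>l<n. Q l"
  have "l < n \<longrightarrow> P l" for l
  proof (induct l rule: less_induct)
    case (less l)
    show ?case
    proof
      assume l: "l < n"
      have "\<forall>l'<l. P l'"
        using less l by auto
      then show "P l"
        using assms[OF l] Q l by blast
    qed
  qed
  then show "\<forall>l<n. P l" by blast
qed

definition argmax_lessThan :: "nat \<Rightarrow> (nat \<Rightarrow> 'a::linorder) \<Rightarrow> nat set" where
  "argmax_lessThan K f = {k. k < K \<and> (\<forall>k'<K. f k' \<le> f k)}"

lemma argmax_lessThan_eq_iff:
  fixes f :: "nat \<Rightarrow> 'a::linorder"
  assumes "J \<subseteq> {..<K}" and "s \<in> J"
  shows "argmax_lessThan K f = J \<longleftrightarrow> (\<forall>k\<in>J. f k = f s) \<and> (\<forall>k\<in>{..<K} - J. f k < f s)"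
proof
  assume max: "argmax_lessThan K f = J"
  then have le: "f k' \<le> f k" if "k \<in> J" "k' < K" for k k'
    using that by (auto simp: argmax_lessThan_def)
  have "f k < f s" if k: "k \<in> {..<K} - J" for k
  proof -
    have "k \<notin> argmax_lessThan K f"
      using k max by simp
    then obtain k' where "k' < K" "f k < f k'"
      using k by (auto simp: argmax_lessThan_def not_le)
    with le[OF assms(2)] show ?thesis
      by (meson less_le_trans)
  qed
  moreover have "f k = f s" if "k \<in> J" for k
    using le[OF assms(2), of k] le[OF that, of s] that assms by (auto intro: order.antisym)
  ultimately show "(\<forall>k\<in>J. f k = f s) \<and> (\<forall>k\<in>{..<K} - J. f k < f s)"
    by blast
next
  assume "(\<forall>k\<in>J. f k = f s) \<and> (\<forall>k\<in>{..<K} - J. f k < f s)"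
  then have eq: "\<And>k. k \<in> J \<Longrightarrow> f k = f s" and lt: "\<And>k. k < K \<Longrightarrow> k \<notin> J \<Longrightarrow> f k < f s"
    by blast+
  have le: "f k \<le> f s" if "k < K" for k
    using eq lt that by (metis order.order_iff_strict)
  show "argmax_lessThan K f = J"
  proof (intro set_eqI iffI)
    fix k assume "k \<in> argmax_lessThan K f"
    then have "k < K" "f s \<le> f k"
      using assms by (auto simp: argmax_lessThan_def)
    then show "k \<in> J"
      using lt by (meson not_le)
  next
    fix k assume "k \<in> J"
    then show "k \<in> argmax_lessThan K f"
      using assms eq[of k] le by (auto simp: argmax_lessThan_def)
  qed
qed

definition rep_piece :: "(nat \<Rightarrow> nat \<Rightarrow> nat set) \<Rightarrow> nat \<Rightarrow> nat \<Rightarrow> nat" where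
  "rep_piece J l i = Min (J l i)"

lemma rep_piece_in:
  assumes "activation_pattern ns K J" and "l < length ns" and "i < ns!l"
  shows "rep_piece J l i \<in> J l i"
proof -
  have "J l i \<noteq> {}" "J l i \<subseteq> {..<K}"
    using assms by (auto simp: activation_pattern_def)
  then show ?thesis
    unfolding rep_piece_def by (intro Min_in) (auto intro: finite_subset)
qed

(* On the activation region of J every unit (l, j) outputs its piece rep_piece J l j, so there
   the features are the affine functions pattern_feat below. *)
fun pattern_weight :: "('n::finite param \<Rightarrow> real) \<Rightarrow> nat list \<Rightarrow> (nat \<Rightarrow> nat \<Rightarrow> nat set) \<Rightarrow> nat \<Rightarrow> nat \<Rightarrow> nat \<Rightarrow> real^'n" where
  "pattern_weight \<theta> ns J 0 i k = (\<chi> j. \<theta> (W0 i k j))"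
| "pattern_weight \<theta> ns J (Suc l) i k =
     (\<Sum>j<ns!l. \<theta> (W (Suc l) i k j) *\<^sub>R pattern_weight \<theta> ns J l j (rep_piece J l j))"

fun pattern_bias :: "('n::finite param \<Rightarrow> real) \<Rightarrow> nat list \<Rightarrow> (nat \<Rightarrow> nat \<Rightarrow> nat set) \<Rightarrow> nat \<Rightarrow> nat \<Rightarrow> nat \<Rightarrow> real" where
  "pattern_bias \<theta> ns J 0 i k = \<theta> (Bp 0 i k)"
| "pattern_bias \<theta> ns J (Suc l) i k =
     (\<Sum>j<ns!l. \<theta> (W (Suc l) i k j) * pattern_bias \<theta> ns J l j (rep_piece J l j)) + \<theta> (Bp (Suc l) i k)"

definition pattern_feat :: "('n::finite param \<Rightarrow> real) \<Rightarrow> nat list \<Rightarrow> (nat \<Rightarrow> nat \<Rightarrow> nat set) \<Rightarrow> nat \<Rightarrow> real^'n \<Rightarrow> nat \<Rightarrow> nat \<Rightarrow> real" where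
  "pattern_feat \<theta> ns J l x i k = pattern_weight \<theta> ns J l i k \<bullet> x + pattern_bias \<theta> ns J l i k"

lemma feat_eq_pattern_feat:
  assumes "activation_pattern ns K J" and "l < length ns"
    and "\<forall>l'<l. \<forall>j<ns!l'. argmax_set \<theta> ns K l' x j = J l' j"
  shows "feat \<theta> ns K l x i k = pattern_feat \<theta> ns J l x i k"
  using assms(2,3)
proof (induct l arbitrary: i k)
  case 0
  then show ?case by (simp add: pattern_feat_def inner_vec_def mult.commute)
next
  case (Suc l)
  have "Max ((\<lambda>k'. feat \<theta> ns K l x j k') ` {..<K}) = pattern_feat \<theta> ns J l x j (rep_piece J l j)"
    if j: "j < ns!l" for j
  proof -
    have "rep_piece J l j \<in> argmax_set \<theta> ns K l x j"
      using Suc.prems j rep_piece_in[OF assms(1), of l j] by auto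
    then have "Max ((\<lambda>k'. feat \<theta> ns K l x j k') ` {..<K}) = feat \<theta> ns K l x j (rep_piece J l j)"
      by (intro Max_eqI) (auto simp: argmax_set_def)
    also have "\<dots> = pattern_feat \<theta> ns J l x j (rep_piece J l j)"
      using Suc by auto
    finally show ?thesis .
  qed
  then show ?case
    by (simp add: pattern_feat_def inner_sum_left sum.distrib algebra_simps)
qed

lemma activation_region_eq_pattern:
  assumes "activation_pattern ns K J"
  shows "activation_region ns K J \<theta> =
    {x. \<forall>l<length ns. \<forall>i<ns!l. argmax_lessThan K (pattern_feat \<theta> ns J l x i) = J l i}"
proof -
  have eq: "argmax_set \<theta> ns K l x i = argmax_lessThan K (pattern_feat \<theta> ns J l x i)"
    if "l < length ns" "\<forall>l'<l. \<forall>j<ns!l'. argmax_set \<theta> ns K l' x j = J l' j" for l x i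
    using feat_eq_pattern_feat[OF assms that] by (simp add: argmax_set_def argmax_lessThan_def)
  show ?thesis
    unfolding activation_region_def
  proof (rule Collect_cong, rule all_less_cong_prefix)
    fix x l
    assume "l < length ns" and "\<forall>l'<l. \<forall>i<ns!l'. argmax_set \<theta> ns K l' x i = J l' i"
    from eq[OF this] show "(\<forall>i<ns!l. argmax_set \<theta> ns K l x i = J l i) \<longleftrightarrow>
        (\<forall>i<ns!l. argmax_lessThan K (pattern_feat \<theta> ns J l x i) = J l i)"
      by simp
  qed
qed

definition hidden_units :: "nat list \<Rightarrow> (nat \<times> nat) set" where
  "hidden_units ns = {(l, i). l < length ns \<and> i < ns!l}"

definition tie_set :: "nat list \<Rightarrow> (nat \<Rightarrow> nat \<Rightarrow> nat set) \<Rightarrow> ((nat \<times> nat) \<times> nat) set" where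
  "tie_set ns J = (SIGMA (l, i):hidden_units ns. J l i - {rep_piece J l i})"

definition loser_set :: "nat list \<Rightarrow> nat \<Rightarrow> (nat \<Rightarrow> nat \<Rightarrow> nat set) \<Rightarrow> ((nat \<times> nat) \<times> nat) set" where
  "loser_set ns K J = (SIGMA (l, i):hidden_units ns. {..<K} - J l i)"

definition gap_weight :: "('n::finite param \<Rightarrow> real) \<Rightarrow> nat list \<Rightarrow> (nat \<Rightarrow> nat \<Rightarrow> nat set) \<Rightarrow> (nat \<times> nat) \<times> nat \<Rightarrow> real^'n" where
  "gap_weight \<theta> ns J = (\<lambda>((l, i), k). pattern_weight \<theta> ns J l i k - pattern_weight \<theta> ns J l i (rep_piece J l i))"

definition gap_offset :: "('n::finite param \<Rightarrow> real) \<Rightarrow> nat list \<Rightarrow> (nat \<Rightarrow> nat \<Rightarrow> nat set) \<Rightarrow> (nat \<times> nat) \<times> nat \<Rightarrow> real" where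
  "gap_offset \<theta> ns J = (\<lambda>((l, i), k). pattern_bias \<theta> ns J l i (rep_piece J l i) - pattern_bias \<theta> ns J l i k)"

lemma activation_region_eq_solution_set:
  assumes "activation_pattern ns K J"
  shows "activation_region ns K J \<theta> =
    solution_set (gap_weight \<theta> ns J) (gap_offset \<theta> ns J) (tie_set ns J) (loser_set ns K J)"
proof -
  have unit: "argmax_lessThan K (pattern_feat \<theta> ns J l x i) = J l i \<longleftrightarrow>
      (\<forall>k\<in>J l i - {rep_piece J l i}. gap_weight \<theta> ns J ((l, i), k) \<bullet> x = gap_offset \<theta> ns J ((l, i), k)) \<and>
      (\<forall>k\<in>{..<K} - J l i. gap_weight \<theta> ns J ((l, i), k) \<bullet> x < gap_offset \<theta> ns J ((l, i), k))"
    if "l < length ns" "i < ns!l" for l i x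
    using assms that rep_piece_in[OF assms that]
    by (subst argmax_lessThan_eq_iff[where s = "rep_piece J l i"])
      (auto simp: activation_pattern_def gap_weight_def gap_offset_def pattern_feat_def
        inner_diff_left algebra_simps)
  have sol: "x \<in> solution_set (gap_weight \<theta> ns J) (gap_offset \<theta> ns J) (tie_set ns J) (loser_set ns K J) \<longleftrightarrow>
      (\<forall>l<length ns. \<forall>i<ns!l.
        (\<forall>k\<in>J l i - {rep_piece J l i}. gap_weight \<theta> ns J ((l, i), k) \<bullet> x = gap_offset \<theta> ns J ((l, i), k)) \<and>
        (\<forall>k\<in>{..<K} - J l i. gap_weight \<theta> ns J ((l, i), k) \<bullet> x < gap_offset \<theta> ns J ((l, i), k)))" for x
    by (auto simp: solution_set_def tie_set_def loser_set_def hidden_units_def)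
  show ?thesis
    unfolding activation_region_eq_pattern[OF assms]
  proof (rule set_eqI)
    fix x
    show "x \<in> {x. \<forall>l<length ns. \<forall>i<ns!l. argmax_lessThan K (pattern_feat \<theta> ns J l x i) = J l i} \<longleftrightarrow>
      x \<in> solution_set (gap_weight \<theta> ns J) (gap_offset \<theta> ns J) (tie_set ns J) (loser_set ns K J)"
      unfolding mem_Collect_eq sol by (simp add: unit)
  qed
qed

lemma finite_hidden_units: "finite (hidden_units ns)"
proof -
  have "hidden_units ns \<subseteq> {..<length ns} \<times> {..<sum_list ns}"
    using elem_le_sum_list[of _ ns] by (fastforce simp: hidden_units_def)
  then show ?thesis by (rule finite_subset) auto
qed

lemma finite_tie_set:
  assumes "activation_pattern ns K J"
  shows "finite (tie_set ns J)"
proof -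
  have "tie_set ns J \<subseteq> hidden_units ns \<times> {..<K}"
    using assms by (auto simp: tie_set_def hidden_units_def activation_pattern_def)
  then show ?thesis
    by (rule finite_subset) (simp add: finite_hidden_units)
qed

lemma finite_loser_set: "finite (loser_set ns K J)"
proof -
  have "loser_set ns K J \<subseteq> hidden_units ns \<times> {..<K}"
    by (auto simp: loser_set_def)
  then show ?thesis
    by (rule finite_subset) (simp add: finite_hidden_units)
qed

lemma card_tie_set:
  assumes "activation_pattern ns K J"
  shows "card (tie_set ns J) = partial_degree ns J"
proof -
  have fin: "finite (J l i)" and rep: "rep_piece J l i \<in> J l i" if "(l, i) \<in> hidden_units ns" for l i
    using that assms rep_piece_in[OF assms] finite_subset[of "J l i" "{..<K}"]
    by (auto simp: hidden_units_def activation_pattern_def)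
  have "card (tie_set ns J) = (\<Sum>(l, i)\<in>hidden_units ns. card (J l i - {rep_piece J l i}))"
    unfolding tie_set_def using fin finite_hidden_units by (subst card_SigmaI) (auto simp: case_prod_beta)
  also have "\<dots> = partial_degree ns J"
    unfolding partial_degree_def hidden_units_def using fin rep
    by (intro sum.cong) (auto simp: hidden_units_def)
  finally show ?thesis .
qed

lemma finite_param_set: "finite (param_set ns K)"
proof -
  define m where "m = Suc (sum_list ns + length ns)"
  have bound: "l < m \<and> i < m" if "l < length ns" "i < ns ! l" for l i
    using that elem_le_sum_list[of l ns] by (simp add: m_def)
  have "param_set ns K \<subseteq>
      (\<lambda>(i, k, j). W0 i k j) ` ({..<m} \<times> {..<K} \<times> UNIV)
    \<union> (\<lambda>(l, i, k, j). W l i k j) ` ({..<m} \<times> {..<m} \<times> {..<K} \<times> {..<m})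
    \<union> (\<lambda>(l, i, k). Bp l i k) ` ({..<m} \<times> {..<m} \<times> {..<K})"
    unfolding param_set_def
    by (auto simp: image_iff; meson bound diff_less less_imp_diff_less zero_less_one length_greater_0_conv)
  then show ?thesis
    by (rule finite_subset) auto
qed

lemma pattern_weight_fun_upd_Bp:
  "pattern_weight (\<theta>(Bp l0 i0 k0 := y)) ns J l i k = pattern_weight \<theta> ns J l i k"
  by (induct l arbitrary: i k) auto

lemma pattern_bias_fun_upd_Bp:
  assumes "k0 \<noteq> rep_piece J l0 i0"
  shows "pattern_bias (\<theta>(Bp l0 i0 k0 := y)) ns J l i k =
    pattern_bias \<theta> ns J l i k + (if (l, i, k) = (l0, i0, k0) then y - \<theta> (Bp l0 i0 k0) else 0)"
proof (induct l arbitrary: i k)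
  case (Suc l)
  let ?\<theta>' = "\<theta>(Bp l0 i0 k0 := y)"
  have "(l, j, rep_piece J l j) \<noteq> (l0, i0, k0)" for j
    using assms by auto
  then have rep: "pattern_bias ?\<theta>' ns J l j (rep_piece J l j) = pattern_bias \<theta> ns J l j (rep_piece J l j)" for j
    using Suc[of j "rep_piece J l j"] by (simp only: if_False add_0_right)
  have "pattern_bias ?\<theta>' ns J (Suc l) i k =
      (\<Sum>j<ns!l. \<theta> (W (Suc l) i k j) * pattern_bias \<theta> ns J l j (rep_piece J l j)) + ?\<theta>' (Bp (Suc l) i k)"
    by (simp only: pattern_bias.simps(2) rep fun_upd_other param.distinct not_False_eq_True)
  also have "\<dots> = pattern_bias \<theta> ns J (Suc l) i k + (if (Suc l, i, k) = (l0, i0, k0) then y - \<theta> (Bp l0 i0 k0) else 0)"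
    by auto
  finally show ?case .
qed simp

lemma gap_weight_fun_upd_Bp: "gap_weight (\<theta>(Bp l0 i0 k0 := y)) ns J q = gap_weight \<theta> ns J q"
  by (simp add: gap_weight_def pattern_weight_fun_upd_Bp split: prod.split)

lemma gap_offset_fun_upd_Bp:
  assumes "k0 \<noteq> rep_piece J l0 i0"
  shows "gap_offset (\<theta>(Bp l0 i0 k0 := y)) ns J q =
    gap_offset \<theta> ns J q - (if q = ((l0, i0), k0) then y - \<theta> (Bp l0 i0 k0) else 0)"
  using assms by (auto simp: gap_offset_def pattern_bias_fun_upd_Bp split: prod.split)

lemma borel_measurable_PiM_lborel_component:
  "(\<lambda>\<theta>. \<theta> p) \<in> borel_measurable (PiM I (\<lambda>_. lborel :: real measure))"
proof (cases "p \<in> I")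
  case False
  have "\<theta> p = undefined" if "\<theta> \<in> space (PiM I (\<lambda>_. lborel :: real measure))" for \<theta>
    using that False unfolding space_PiM by (rule PiE_arb)
  then have "(\<lambda>\<theta>. \<theta> p) \<in> borel_measurable (PiM I (\<lambda>_. lborel :: real measure)) \<longleftrightarrow>
      (\<lambda>_. undefined :: real) \<in> borel_measurable (PiM I (\<lambda>_. lborel :: real measure))"
    by (rule measurable_cong)
  then show ?thesis by simp
qed (simp add: measurable_component_singleton measurable_lborel1)

lemma borel_measurable_pattern_weight:
  "(\<lambda>\<theta>. pattern_weight \<theta> ns J l i k) \<in> borel_measurable (PiM I (\<lambda>_. lborel))"
proof (induct l arbitrary: i k)
  case 0
  have "(\<lambda>\<theta>. pattern_weight \<theta> ns J 0 i k \<bullet> b) \<in> borel_measurable (PiM I (\<lambda>_. lborel))" if "b \<in> Basis" for b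
    using that by (auto simp: Basis_vec_def inner_axis borel_measurable_PiM_lborel_component)
  then show ?case
    unfolding borel_measurable_euclidean_space[where f = "\<lambda>\<theta>. pattern_weight \<theta> ns J 0 i k"] by blast
next
  case (Suc l)
  then show ?case
    by (simp add: borel_measurable_PiM_lborel_component borel_measurable_sum borel_measurable_scaleR)
qed

lemma borel_measurable_pattern_bias:
  "(\<lambda>\<theta>. pattern_bias \<theta> ns J l i k) \<in> borel_measurable (PiM I (\<lambda>_. lborel))"
  by (induct l arbitrary: i k)
    (simp_all add: borel_measurable_PiM_lborel_component borel_measurable_add borel_measurable_sum
      borel_measurable_times)

lemma borel_measurable_gap_weight:
  "(\<lambda>\<theta>. gap_weight \<theta> ns J q) \<in> borel_measurable (PiM I (\<lambda>_. lborel))"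
proof -
  obtain l i k where "q = ((l, i), k)"
    by (metis prod.collapse)
  then show ?thesis
    by (simp add: gap_weight_def borel_measurable_diff borel_measurable_pattern_weight)
qed

lemma borel_measurable_gap_offset:
  "(\<lambda>\<theta>. gap_offset \<theta> ns J q) \<in> borel_measurable (PiM I (\<lambda>_. lborel))"
proof -
  obtain l i k where "q = ((l, i), k)"
    by (metis prod.collapse)
  then show ?thesis
    by (simp add: gap_offset_def borel_measurable_diff borel_measurable_pattern_bias)
qed

lemma AE_dim_gap_weight_eq_card:
  assumes "activation_pattern ns K J"
  shows "AE \<theta> in PiM (param_set ns K) (\<lambda>_. lborel).
    (\<exists>x. \<forall>q\<in>tie_set ns J. gap_weight \<theta> ns J q \<bullet> x = gap_offset \<theta> ns J q)
      \<longrightarrow> dim (gap_weight \<theta> ns J ` tie_set ns J) = card (tie_set ns J)"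
proof (rule AE_solvable_imp_dim_eq_card[where p = "\<lambda>((l, i), k). Bp l i k"])
  show "(\<lambda>((l, i), k). Bp l i k) ` tie_set ns J \<subseteq> param_set ns K"
    using assms by (fastforce simp: tie_set_def hidden_units_def param_set_def activation_pattern_def)
  show "(\<lambda>\<theta>. gap_weight \<theta> ns J q) \<in> borel_measurable (PiM (param_set ns K) (\<lambda>_. lborel))"
    "(\<lambda>\<theta>. gap_offset \<theta> ns J q) \<in> borel_measurable (PiM (param_set ns K) (\<lambda>_. lborel))" for q
    by (simp_all add: borel_measurable_gap_weight borel_measurable_gap_offset)
  fix \<theta> y q
  assume q: "q \<in> tie_set ns J"
  then obtain l i k where q_eq: "q = ((l, i), k)" and k: "k \<noteq> rep_piece J l i"
    by (auto simp: tie_set_def)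
  show "gap_weight (\<theta>((\<lambda>((l, i), k). Bp l i k) q := y)) ns J q' = gap_weight \<theta> ns J q'" for q'
    by (simp add: q_eq gap_weight_fun_upd_Bp)
  show "gap_offset (\<theta>((\<lambda>((l, i), k). Bp l i k) q := y)) ns J q' = gap_offset \<theta> ns J q'" if "q' \<noteq> q" for q'
    using that by (simp add: q_eq gap_offset_fun_upd_Bp[OF k])
  show "inj (\<lambda>y. gap_offset (\<theta>((\<lambda>((l, i), k). Bp l i k) q := y)) ns J q)"
    by (rule injI) (simp add: q_eq gap_offset_fun_upd_Bp[OF k])
qed (simp_all add: finite_param_set finite_tie_set[OF assms])

lemma AE_aff_dim_activation_region:
  assumes "activation_pattern ns K J"
  shows "AE \<theta> :: 'n::finite param \<Rightarrow> real in PiM (param_set ns K) (\<lambda>_. lborel).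
    activation_region ns K J \<theta> = {}
    \<or> aff_dim (activation_region ns K J \<theta>) = int CARD('n) - int (partial_degree ns J)"
  using AE_dim_gap_weight_eq_card[OF assms]
proof (rule eventually_mono)
  fix \<theta> :: "'n param \<Rightarrow> real"
  assume generic: "(\<exists>x. \<forall>q\<in>tie_set ns J. gap_weight \<theta> ns J q \<bullet> x = gap_offset \<theta> ns J q)
    \<longrightarrow> dim (gap_weight \<theta> ns J ` tie_set ns J) = card (tie_set ns J)"
  note region = activation_region_eq_solution_set[OF assms]
  show "activation_region ns K J \<theta> = {}
    \<or> aff_dim (activation_region ns K J \<theta>) = int CARD('n) - int (partial_degree ns J)"
  proof (cases "activation_region ns K J \<theta> = {}")
    case False
    then have "dim (gap_weight \<theta> ns J ` tie_set ns J) = partial_degree ns J"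
      using generic card_tie_set[OF assms] by (auto simp: region solution_set_def)
    then show ?thesis
      using aff_dim_solution_set[OF finite_loser_set, where A = "gap_weight \<theta> ns J"] False
      by (simp add: region)
  qed simp
qed

theorem lemma1:
  fixes ns :: "nat list" and K :: nat and r :: nat
    and J :: "nat \<Rightarrow> nat \<Rightarrow> nat set"
  assumes "1 \<le> K"
    and "r \<le> CARD('n::finite)"
    and "activation_pattern ns K J"
    and "partial_degree ns J = r"
  shows "(\<forall>\<theta> :: 'n param \<Rightarrow> real.
            convex (activation_region ns K J \<theta>)
          \<and> rel_interior (activation_region ns K J \<theta>) = activation_region ns K J \<theta>
          \<and> (\<exists>P. polyhedron P \<and> activation_region ns K J \<theta> = rel_interior P))
       \<and> (AE \<theta> :: 'n param \<Rightarrow> real in PiM (param_set ns K) (\<lambda>_. lborel).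
            activation_region ns K J \<theta> = {}
          \<or> aff_dim (activation_region ns K J \<theta>) = int CARD('n) - int r)"
proof -
  note region = activation_region_eq_solution_set[OF assms(3)]
  have "finite (tie_set ns J)" "finite (loser_set ns K J)"
    using finite_tie_set[OF assms(3)] finite_loser_set by auto
  then show ?thesis
    using AE_aff_dim_activation_region[OF assms(3)] assms(4)
    by (simp add: region convex_solution_set rel_interior_solution_set
        solution_set_eq_rel_interior_polyhedron)
qed

end
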